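(* Let $\overrightarrow{W}$ be a Morse sequence on a simplicial complex $K$. Then $\overline\Phi_p=\widetilde\curlywedge_p\circ\curlywedge_p$ and $\underline\Phi_p=\widetilde\curlyvee_p\circ\curlyvee_p$ as maps $K[p]\to K[p]$, for every $p$.
   Context: A simplicial complex $K$ is a finite collection of non-empty finite sets closed under taking non-empty subsets; $\dim\sigma=|\sigma|-1$, $K^{(p)}$ the set of $p$-simplices. A pair $(\sigma,\tau)$ with $\sigma\subsetneq\tau$ is a free pair for $K$ if $\tau$ is the only simplex other than $\sigma$ containing $\sigma$; $K$ is then an elementary expansion of $K\setminus\{\sigma,\tau\}$. If $\nu$ is a facet (maximal simplex) of $K$, $K$ is an elementary filling of $K\setminus\{\nu\}$. A Morse sequence on $K$ is a sequence $\langle\emptyset=K_0,\dots,K_k=K\rangle$ with each $K_i$ an elementary expansion or filling of $K_{i-1}$; simplices added by fillings are critical; for an expansion $K_i=K_{i-1}\cup\{\sigma,\tau\}$, $\sigma\subset\tau$, $(\sigma,\tau)$ is a regular pair, $\sigma$ lower regular, $\tau$ upper regular. $\widehat W$ is the set of critical simplices. $K[p]$ is the $\mathbb{Z}_2$-vector space of subsets of $K^{(p)}$ (sum = symmetric difference, $0=\emptyset$), $\widehat W[p]=\{c\in K[p]:c\subseteq\widehat W\}$. For $\sigma\in K^{(p)}$, $\partial(\sigma)=\{\tau\in K^{(p-1)}:\tau\subset\sigma\}$, $\delta(\sigma)=\{\tau\in K^{(p+1)}:\sigma\subset\tau\}$, with linear extensions $\partial_p,\delta_p$. The reference map $\curlywedge$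 is the unique map assigning to each $p$-simplex an element of $\widehat W[p]$, with linear extension $\curlywedge_p$, such that $\curlywedge(\nu)=\{\nu\}$ for critical $\nu$ and $\curlywedge(\tau)=0=\curlywedge(\partial(\tau))$ for upper regular $\tau$; the coreference map $\curlyvee$ (linear extension $\curlyvee_p$) is the unique such map with $\curlyvee(\nu)=\{\nu\}$ for critical $\nu$ and $\curlyvee(\sigma)=0=\curlyvee(\delta(\sigma))$ for lower regular $\sigma$. Extension maps: $\widetilde\curlywedge_p,\widetilde\curlyvee_p:\widehat W[p]\to K[p]$ linear with $\widetilde\curlywedge(\kappa)=\{\nu\in K:\kappa\in\curlyvee(\nu)\}$, $\widetilde\curlyvee(\kappa)=\{\nu\in K:\kappa\in\curlywedge(\nu)\}$ for critical $\kappa$. Let $V_p:K[p]\to K[p+1]$ and $V^*_p:K[p]\to K[p-1]$ be the linear maps with $V(\kappa)=V^*(\kappa)=0$ for critical $\kappa$, and $V(\sigma)=\tau$, $V(\tau)=0$, $V^*(\sigma)=0$, $V^*(\tau)=\sigma$ for each regular pair $(\sigma,\tau)$. The gradient flow $\Phi_p:K[p]\to K[p]$ and coflow $\Phi^*_p:K[p]\to K[p]$ are the linear maps with $\Phi_p(\nu)=\nu+\partial_{p+1}(V_p(\nu))+V_{p-1}(\partial_p(\nu))$ and $\Phi^*_p(\nu)=\nu+\delta_{p-1}(V^*_p(\nu))+V^*_{p+1}(\delta_p(\nu))$ for $\nu\in K^{(p)}$. For each $c\in K[p]$ there are integers $i,j\ge0$ with $\Phi^{i+1}(c)=\Phi^i(c)$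 and $(\Phi^* )^{j+1}(c)=(\Phi^* )^j(c)$; one sets $\overline\Phi_p(c)=\Phi^i(c)$ and $\underline\Phi_p(c)=(\Phi^* )^j(c)$. *)

theory Defs
  imports Main
begin

text \<open>Simplices are finite non-empty vertex sets; a complex is a set of simplices.
  Chains over Z_2 (elements of K[p]) are finite sets of simplices; the sum is
  symmetric difference.\<close>

definition simplicial_complex :: "'v set set \<Rightarrow> bool" where
  "simplicial_complex K \<longleftrightarrow> finite K \<and> (\<forall>\<sigma>\<in>K. \<sigma> \<noteq> {} \<and> finite \<sigma>) \<and>
     (\<forall>\<sigma>\<in>K. \<forall>\<tau>. \<tau> \<noteq> {} \<and> \<tau> \<subseteq> \<sigma> \<longrightarrow> \<tau> \<in> K)"

definition simplices_dim :: "'v set set \<Rightarrow> nat \<Rightarrow> 'v set set" where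
  "simplices_dim K p = {\<sigma>\<in>K. card \<sigma> = Suc p}"

definition free_pair :: "'v set set \<Rightarrow> 'v set \<Rightarrow> 'v set \<Rightarrow> bool" where
  "free_pair K \<sigma> \<tau> \<longleftrightarrow> \<sigma> \<subset> \<tau> \<and> \<sigma> \<in> K \<and> \<tau> \<in> K \<and>
     (\<forall>\<rho>\<in>K. \<sigma> \<subseteq> \<rho> \<longrightarrow> \<rho> = \<sigma> \<or> \<rho> = \<tau>)"

definition facet :: "'v set set \<Rightarrow> 'v set \<Rightarrow> bool" where
  "facet K \<nu> \<longleftrightarrow> \<nu> \<in> K \<and> (\<forall>\<rho>\<in>K. \<nu> \<subseteq> \<rho> \<longrightarrow> \<rho> = \<nu>)"

text \<open>A step of a Morse sequence: an elementary filling adding a critical simplex,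
  or an elementary expansion adding a regular pair (sigma, tau).\<close>
datatype 'v step = Fill "'v set" | Expand "'v set" "'v set"

fun added :: "'v step \<Rightarrow> 'v set set" where
  "added (Fill \<nu>) = {\<nu>}"
| "added (Expand \<sigma> \<tau>) = {\<sigma>, \<tau>}"

definition prefix_complex :: "'v step list \<Rightarrow> nat \<Rightarrow> 'v set set" where
  "prefix_complex W i = \<Union> (added ` set (take i W))"

definition morse_sequence :: "'v set set \<Rightarrow> 'v step list \<Rightarrow> bool" where
  "morse_sequence K W \<longleftrightarrow>
     (\<forall>i\<le>length W. simplicial_complex (prefix_complex W i)) \<and>
     prefix_complex W (length W) = K \<and>
     (\<forall>i<length W. (case W ! i of
        Fill \<nu> \<Rightarrow> \<nu> \<notin> prefix_complex W i \<and> facet (prefix_complex W (Suc i)) \<nu>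
      | Expand \<sigma> \<tau> \<Rightarrow> \<sigma> \<notin> prefix_complex W i \<and> \<tau> \<notin> prefix_complex W i \<and>
                        free_pair (prefix_complex W (Suc i)) \<sigma> \<tau>))"

definition critical :: "'v step list \<Rightarrow> 'v set set" where
  "critical W = {\<nu>. Fill \<nu> \<in> set W}"

definition lower_regular :: "'v step list \<Rightarrow> 'v set set" where
  "lower_regular W = {\<sigma>. \<exists>\<tau>. Expand \<sigma> \<tau> \<in> set W}"

definition upper_regular :: "'v step list \<Rightarrow> 'v set set" where
  "upper_regular W = {\<tau>. \<exists>\<sigma>. Expand \<sigma> \<tau> \<in> set W}"

text \<open>Z_2-linear extension of a map on simplices to chains (finite sets of simplices).\<close>
definition lin :: "('v set \<Rightarrow> 'v set set) \<Rightarrow> 'v set set \<Rightarrow> 'v set set" where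
  "lin f c = {x. odd (card {\<nu>\<in>c. x \<in> f \<nu>})}"

definition sdiff :: "'a set \<Rightarrow> 'a set \<Rightarrow> 'a set" where
  "sdiff A B = (A - B) \<union> (B - A)"

definition bd :: "'v set set \<Rightarrow> 'v set \<Rightarrow> 'v set set" where
  "bd K \<sigma> = {\<tau>\<in>K. \<tau> \<subset> \<sigma> \<and> card \<tau> + 1 = card \<sigma>}"

definition cobd :: "'v set set \<Rightarrow> 'v set \<Rightarrow> 'v set set" where
  "cobd K \<sigma> = {\<tau>\<in>K. \<sigma> \<subset> \<tau> \<and> card \<tau> = card \<sigma> + 1}"

definition is_reference_map :: "'v set set \<Rightarrow> 'v step list \<Rightarrow> ('v set \<Rightarrow> 'v set set) \<Rightarrow> bool" where
  "is_reference_map K W f \<longleftrightarrow>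
     (\<forall>\<nu>. \<nu> \<notin> K \<longrightarrow> f \<nu> = {}) \<and>
     (\<forall>\<nu>\<in>K. f \<nu> \<subseteq> critical W \<inter> simplices_dim K (card \<nu> - 1)) \<and>
     (\<forall>\<nu>\<in>critical W. f \<nu> = {\<nu>}) \<and>
     (\<forall>\<tau>\<in>upper_regular W. f \<tau> = {} \<and> lin f (bd K \<tau>) = {})"

definition is_coreference_map :: "'v set set \<Rightarrow> 'v step list \<Rightarrow> ('v set \<Rightarrow> 'v set set) \<Rightarrow> bool" where
  "is_coreference_map K W f \<longleftrightarrow>
     (\<forall>\<nu>. \<nu> \<notin> K \<longrightarrow> f \<nu> = {}) \<and>
     (\<forall>\<nu>\<in>K. f \<nu> \<subseteq> critical W \<inter> simplices_dim K (card \<nu> - 1)) \<and>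
     (\<forall>\<nu>\<in>critical W. f \<nu> = {\<nu>}) \<and>
     (\<forall>\<sigma>\<in>lower_regular W. f \<sigma> = {} \<and> lin f (cobd K \<sigma>) = {})"

definition reference_map :: "'v set set \<Rightarrow> 'v step list \<Rightarrow> 'v set \<Rightarrow> 'v set set" where
  "reference_map K W = (THE f. is_reference_map K W f)"

definition coreference_map :: "'v set set \<Rightarrow> 'v step list \<Rightarrow> 'v set \<Rightarrow> 'v set set" where
  "coreference_map K W = (THE f. is_coreference_map K W f)"

definition ext_reference :: "'v set set \<Rightarrow> 'v step list \<Rightarrow> 'v set \<Rightarrow> 'v set set" where
  "ext_reference K W \<kappa> = {\<nu>\<in>K. \<kappa> \<in> coreference_map K W \<nu>}"

definition ext_coreference :: "'v set set \<Rightarrow> 'v step list \<Rightarrow> 'v set \<Rightarrow> 'v set set" where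
  "ext_coreference K W \<kappa> = {\<nu>\<in>K. \<kappa> \<in> reference_map K W \<nu>}"

definition Vmap :: "'v step list \<Rightarrow> 'v set \<Rightarrow> 'v set set" where
  "Vmap W \<sigma> = {\<tau>. Expand \<sigma> \<tau> \<in> set W}"

definition Vstar :: "'v step list \<Rightarrow> 'v set \<Rightarrow> 'v set set" where
  "Vstar W \<tau> = {\<sigma>. Expand \<sigma> \<tau> \<in> set W}"

definition flow :: "'v set set \<Rightarrow> 'v step list \<Rightarrow> 'v set set \<Rightarrow> 'v set set" where
  "flow K W = lin (\<lambda>\<nu>. sdiff (sdiff {\<nu>} (lin (bd K) (Vmap W \<nu>))) (lin (Vmap W) (bd K \<nu>)))"

definition coflow :: "'v set set \<Rightarrow> 'v step list \<Rightarrow> 'v set set \<Rightarrow> 'v set set" where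
  "coflow K W = lin (\<lambda>\<nu>. sdiff (sdiff {\<nu>} (lin (cobd K) (Vstar W \<nu>))) (lin (Vstar W) (cobd K \<nu>)))"

definition flow_bar :: "'v set set \<Rightarrow> 'v step list \<Rightarrow> 'v set set \<Rightarrow> 'v set set" where
  "flow_bar K W c = (flow K W ^^ (LEAST i. (flow K W ^^ Suc i) c = (flow K W ^^ i) c)) c"

definition coflow_bar :: "'v set set \<Rightarrow> 'v step list \<Rightarrow> 'v set set \<Rightarrow> 'v set set" where
  "coflow_bar K W c = (coflow K W ^^ (LEAST j. (coflow K W ^^ Suc j) c = (coflow K W ^^ j) c)) c"

end

theory Submission
  imports Defs
begin

text \<open>
  Number the simplices by the step of the Morse sequence that adds them. The flow
  \<open>\<Phi> = 1 + \<partial>V + V\<partial>\<close> maps a regular simplex to a chain of earlier simplices, and a critical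
  simplex \<open>\<kappa>\<close> to \<open>\<kappa>\<close> plus earlier upper regular simplices; by induction on the step, every
  chain is eventually fixed by \<open>\<Phi>\<close>. A fixed chain has no lower regular simplices, and it is
  zero if it has no critical ones. The reference map is invariant under \<open>\<Phi>\<close>, so it sends the
  limit \<open>\<Phi>\<^sup>\<infinity>(c)\<close> to its critical part; and the extension of a critical chain by the
  coreference map is a fixed chain with the same critical part. Hence both sides are fixed chains
  with equal critical parts and therefore equal. Reversing the Morse sequence swaps lower and upper
  regular simplices and boundary and coboundary, which turns the statement for the flow into the
  one for the coflow.
\<close>

lemma sdiff_empty [simp]: "sdiff A {} = A" "sdiff {} A = A"
  by (auto simp: sdiff_def)

lemma sdiff_eq_empty_iff: "sdiff A B = {} \<longleftrightarrow> A = B"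
  by (auto simp: sdiff_def)

lemma sdiff_subset: "A \<subseteq> X \<Longrightarrow> B \<subseteq> X \<Longrightarrow> sdiff A B \<subseteq> X"
  by (auto simp: sdiff_def)

lemma sdiff_singleton_mem: "a \<in> B \<Longrightarrow> sdiff {a} B = B - {a}"
  by (auto simp: sdiff_def)

lemma finite_sdiff [simp]: "finite A \<Longrightarrow> finite B \<Longrightarrow> finite (sdiff A B)"
  by (auto simp: sdiff_def)

lemma odd_card_sdiff_iff:
  assumes "finite A" "finite B"
  shows "odd (card (sdiff A B)) \<longleftrightarrow> odd (card A) \<noteq> odd (card B)"
proof -
  have "sdiff A B = (A \<union> B) - (A \<inter> B)" by (auto simp: sdiff_def)
  moreover have "A \<inter> B \<subseteq> A \<union> B" by blast
  ultimately have "card (sdiff A B) + card (A \<inter> B) = card (A \<union> B)"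
    using assms by (simp add: card_Diff_subset card_mono)
  then have "card (sdiff A B) + 2 * card (A \<inter> B) = card A + card B"
    using card_Un_Int[OF assms] by simp
  then show ?thesis by presburger
qed

lemma mem_lin_iff: "x \<in> lin f c \<longleftrightarrow> odd (card {\<nu>\<in>c. x \<in> f \<nu>})"
  by (simp add: lin_def)

lemma lin_empty [simp]: "lin f {} = {}"
  by (simp add: lin_def)

lemma lin_cong: "(\<And>\<nu>. \<nu> \<in> c \<Longrightarrow> f \<nu> = g \<nu>) \<Longrightarrow> lin f c = lin g c"
  unfolding lin_def by (simp cong: conj_cong)

lemma lin_eq_empty:
  assumes "\<And>\<nu>. \<nu> \<in> c \<Longrightarrow> f \<nu> = {}"
  shows "lin f c = {}"
proof -
  have empty: "{\<nu>\<in>c. x \<in> f \<nu>} = {}" for x using assms by blast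
  show ?thesis unfolding lin_def empty by simp
qed

lemma lin_subset_UN: "lin f c \<subseteq> (\<Union>\<nu>\<in>c. f \<nu>)"
proof
  fix x assume "x \<in> lin f c"
  then have "{\<nu>\<in>c. x \<in> f \<nu>} \<noteq> {}" by (metis mem_lin_iff card.empty even_zero)
  then show "x \<in> (\<Union>\<nu>\<in>c. f \<nu>)" by blast
qed

lemma finite_lin: "finite c \<Longrightarrow> (\<And>\<nu>. \<nu> \<in> c \<Longrightarrow> finite (f \<nu>)) \<Longrightarrow> finite (lin f c)"
  by (meson finite_UN_I finite_subset lin_subset_UN)

lemma lin_disjoint_eq_UN:
  assumes "\<And>a b x. a \<in> c \<Longrightarrow> b \<in> c \<Longrightarrow> x \<in> f a \<Longrightarrow> x \<in> f b \<Longrightarrow> a = b"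
  shows "lin f c = (\<Union>\<nu>\<in>c. f \<nu>)"
proof (rule set_eqI)
  fix x
  show "x \<in> lin f c \<longleftrightarrow> x \<in> (\<Union>\<nu>\<in>c. f \<nu>)"
  proof (cases "\<exists>a\<in>c. x \<in> f a")
    case True
    then obtain a where "a \<in> c" "x \<in> f a" by blast
    then have "{\<nu>\<in>c. x \<in> f \<nu>} = {a}" using assms by blast
    then show ?thesis unfolding mem_lin_iff using \<open>a \<in> c\<close> \<open>x \<in> f a\<close> by auto
  next
    case False
    then have empty: "{\<nu>\<in>c. x \<in> f \<nu>} = {}" by blast
    show ?thesis unfolding mem_lin_iff empty using False by simp
  qed
qed

lemma lin_singleton [simp]: "lin f {\<nu>} = f \<nu>"
  by (subst lin_disjoint_eq_UN) auto

lemma lin_singleton_fun: "lin (\<lambda>\<nu>. {\<nu>}) c = c"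
  by (subst lin_disjoint_eq_UN) auto

lemma lin_sdiff:
  assumes "finite a" "finite b"
  shows "lin f (sdiff a b) = sdiff (lin f a) (lin f b)"
proof (rule set_eqI)
  fix x
  have "{\<nu>\<in>sdiff a b. x \<in> f \<nu>} = sdiff {\<nu>\<in>a. x \<in> f \<nu>} {\<nu>\<in>b. x \<in> f \<nu>}"
    by (auto simp: sdiff_def)
  then show "x \<in> lin f (sdiff a b) \<longleftrightarrow> x \<in> sdiff (lin f a) (lin f b)"
    using assms by (simp add: mem_lin_iff odd_card_sdiff_iff) (auto simp: sdiff_def lin_def)
qed

lemma lin_insert:
  assumes "finite c" "\<nu> \<notin> c"
  shows "lin f (insert \<nu> c) = sdiff (f \<nu>) (lin f c)"
proof -
  have "insert \<nu> c = sdiff {\<nu>} c" using assms(2) by (auto simp: sdiff_def)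
  then show ?thesis using assms(1) by (simp add: lin_sdiff)
qed

lemma lin_remove:
  assumes "finite c" "\<nu> \<in> c"
  shows "lin f c = sdiff (f \<nu>) (lin f (c - {\<nu>}))"
  using lin_insert[of "c - {\<nu>}" \<nu> f] assms by (simp add: insert_absorb)

lemma lin_sdiff_fun:
  assumes "finite c"
  shows "lin (\<lambda>\<nu>. sdiff (f \<nu>) (g \<nu>)) c = sdiff (lin f c) (lin g c)"
  using assms
  by (induction c rule: finite_induct) (auto simp: lin_insert sdiff_def)

lemma lin_lin:
  assumes "finite c" "\<And>\<nu>. \<nu> \<in> c \<Longrightarrow> finite (g \<nu>)"
  shows "lin f (lin g c) = lin (\<lambda>\<nu>. lin f (g \<nu>)) c"
  using assms
proof (induction c rule: finite_induct)
  case (insert \<nu> c)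
  have "finite (lin g c)" using insert by (intro finite_lin) auto
  then show ?case using insert by (simp add: lin_insert lin_sdiff)
qed simp

lemma funpow_invariant:
  fixes F :: "'a \<Rightarrow> 'a"
  assumes "\<And>x. P x \<Longrightarrow> P (F x)" "P a"
  shows "P ((F ^^ n) a)"
  by (induction n) (simp_all add: assms)

lemma funpow_fixed_from:
  fixes F :: "'a \<Rightarrow> 'a"
  assumes "(F ^^ Suc n) a = (F ^^ n) a" "n \<le> m"
  shows "(F ^^ m) a = (F ^^ n) a"
  using assms(2)
proof (induction m rule: dec_induct)
  case (step m)
  then have "(F ^^ Suc m) a = F ((F ^^ n) a)" by simp
  then show ?case using assms(1) by simp
qed simp

definition stabilizes :: "('a \<Rightarrow> 'a) \<Rightarrow> 'a \<Rightarrow> bool" where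
  "stabilizes F c \<longleftrightarrow> (\<exists>n. (F ^^ Suc n) c = (F ^^ n) c)"

definition stable_limit :: "('a \<Rightarrow> 'a) \<Rightarrow> 'a \<Rightarrow> 'a" where
  "stable_limit F c = (F ^^ (LEAST i. (F ^^ Suc i) c = (F ^^ i) c)) c"

lemma stable_limit_fixed:
  assumes "stabilizes F c"
  shows "F (stable_limit F c) = stable_limit F c"
  using assms LeastI_ex[of "\<lambda>i. (F ^^ Suc i) c = (F ^^ i) c"]
  by (simp add: stable_limit_def stabilizes_def)

lemma stable_limit_funpow:
  obtains n where "stable_limit F c = (F ^^ n) c"
  unfolding stable_limit_def by blast

definition is_reference_map_on ::
    "'v set set \<Rightarrow> 'v set set \<Rightarrow> 'v set set \<Rightarrow> ('v set \<Rightarrow> 'v set set) \<Rightarrow> ('v set \<Rightarrow> nat)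
      \<Rightarrow> ('v set \<Rightarrow> 'v set set) \<Rightarrow> bool" where
  "is_reference_map_on C crit upper bnd grade f \<longleftrightarrow>
     (\<forall>\<nu>. \<nu> \<notin> C \<longrightarrow> f \<nu> = {}) \<and>
     (\<forall>\<nu>\<in>C. f \<nu> \<subseteq> crit \<inter> {x\<in>C. grade x = grade \<nu>}) \<and>
     (\<forall>\<nu>\<in>crit. f \<nu> = {\<nu>}) \<and>
     (\<forall>\<tau>\<in>upper. f \<tau> = {} \<and> lin f (bnd \<tau>) = {})"

definition gradient_flow ::
    "('v set \<Rightarrow> 'v set set) \<Rightarrow> ('v set \<Rightarrow> 'v set set) \<Rightarrow> 'v set set \<Rightarrow> 'v set set" where
  "gradient_flow bnd V = lin (\<lambda>\<nu>. sdiff (sdiff {\<nu>} (lin bnd (V \<nu>))) (lin V (bnd \<nu>)))"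

definition ext_map :: "'v set set \<Rightarrow> ('v set \<Rightarrow> 'v set set) \<Rightarrow> 'v set \<Rightarrow> 'v set set" where
  "ext_map C g \<kappa> = {\<nu>\<in>C. \<kappa> \<in> g \<nu>}"

lemma is_reference_map_onD:
  assumes "is_reference_map_on C crit upper bnd grade f"
  shows "\<nu> \<notin> C \<Longrightarrow> f \<nu> = {}"
    and "\<nu> \<in> C \<Longrightarrow> f \<nu> \<subseteq> crit \<inter> {x\<in>C. grade x = grade \<nu>}"
    and "\<nu> \<in> crit \<Longrightarrow> f \<nu> = {\<nu>}"
    and "\<tau> \<in> upper \<Longrightarrow> f \<tau> = {}"
    and "\<tau> \<in> upper \<Longrightarrow> lin f (bnd \<tau>) = {}"
  using assms by (simp_all add: is_reference_map_on_def)

text \<open>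
  An abstract Morse sequence: the cells \<open>C\<close> are the simplices, \<open>bnd\<close>/\<open>cobnd\<close> the facets and
  cofacets, \<open>V\<close> the gradient vector field, \<open>stage \<nu> < N\<close> the step of the sequence adding \<open>\<nu>\<close>,
  and \<open>grade\<close> the dimension.
\<close>
locale morse_matching =
  fixes C crit lower upper :: "'v set set"
    and bnd cobnd V :: "'v set \<Rightarrow> 'v set set"
    and stage grade :: "'v set \<Rightarrow> nat"
    and N :: nat
  assumes finite_cells: "finite C"
    and cells_partition: "crit \<union> lower \<union> upper = C"
    and crit_lower_disjoint: "crit \<inter> lower = {}"
    and crit_upper_disjoint: "crit \<inter> upper = {}"
    and lower_upper_disjoint: "lower \<inter> upper = {}"
    and bnd_subset: "bnd \<nu> \<subseteq> C"
    and cobnd_subset: "cobnd \<nu> \<subseteq> C"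
    and bnd_cobnd_iff: "\<nu> \<in> C \<Longrightarrow> \<sigma> \<in> C \<Longrightarrow> \<sigma> \<in> bnd \<nu> \<longleftrightarrow> \<nu> \<in> cobnd \<sigma>"
    and V_not_lower: "\<nu> \<notin> lower \<Longrightarrow> V \<nu> = {}"
    and V_lower: "\<sigma> \<in> lower \<Longrightarrow> \<exists>\<tau>. V \<sigma> = {\<tau>} \<and> \<tau> \<in> upper \<and> \<sigma> \<in> bnd \<tau>"
    and V_inj: "x \<in> V a \<Longrightarrow> x \<in> V b \<Longrightarrow> a = b"
    and V_onto: "\<tau> \<in> upper \<Longrightarrow> \<exists>\<sigma>. \<tau> \<in> V \<sigma>"
    and stage_bnd: "\<nu> \<in> C \<Longrightarrow> \<rho> \<in> bnd \<nu> \<Longrightarrow> stage \<rho> < stage \<nu> \<or> \<nu> \<in> V \<rho>"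
    and stage_V: "\<tau> \<in> V \<sigma> \<Longrightarrow> stage \<tau> = stage \<sigma>"
    and stage_less: "\<nu> \<in> C \<Longrightarrow> stage \<nu> < N"
    and grade_bnd: "\<rho> \<in> bnd \<nu> \<Longrightarrow> \<rho>' \<in> bnd \<nu> \<Longrightarrow> grade \<rho> = grade \<rho>'"
    and grade_cobnd: "\<rho> \<in> cobnd \<nu> \<Longrightarrow> \<rho>' \<in> cobnd \<nu> \<Longrightarrow> grade \<rho> = grade \<rho>'"
begin

lemma crit_subset: "crit \<subseteq> C" and lower_subset: "lower \<subseteq> C" and upper_subset: "upper \<subseteq> C"
  using cells_partition by auto

lemma V_subset_upper: "V \<nu> \<subseteq> upper"
  using V_not_lower V_lower by (cases "\<nu> \<in> lower") (force, simp)

lemma finite_subset_cells: "c \<subseteq> C \<Longrightarrow> finite c"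
  using finite_cells by (rule finite_subset[rotated])

lemma finite_bnd [simp]: "finite (bnd \<nu>)"
  and finite_V [simp]: "finite (V \<nu>)"
  using bnd_subset V_subset_upper upper_subset finite_subset_cells
  by (blast intro: finite_subset_cells)+

lemma lower_if_V: "\<tau> \<in> V \<sigma> \<Longrightarrow> \<sigma> \<in> lower"
  using V_not_lower by blast

lemma V_eq_singleton:
  assumes "\<tau> \<in> V \<sigma>"
  shows "V \<sigma> = {\<tau>}" "\<tau> \<in> upper" "\<sigma> \<in> bnd \<tau>"
proof -
  obtain \<tau>' where "V \<sigma> = {\<tau>'}" "\<tau>' \<in> upper" "\<sigma> \<in> bnd \<tau>'"
    using V_lower[OF lower_if_V[OF assms]] by blast
  then show "V \<sigma> = {\<tau>}" "\<tau> \<in> upper" "\<sigma> \<in> bnd \<tau>" using assms by auto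
qed

lemma upper_matched:
  assumes "\<tau> \<in> upper"
  obtains \<sigma> where "\<sigma> \<in> lower" "V \<sigma> = {\<tau>}" "\<sigma> \<in> bnd \<tau>"
proof -
  obtain \<sigma> where \<sigma>: "\<tau> \<in> V \<sigma>" using V_onto[OF assms] by blast
  show thesis by (rule that[OF lower_if_V[OF \<sigma>] V_eq_singleton(1,3)[OF \<sigma>]])
qed

lemma stage_bnd_partner:
  assumes "V \<nu> = {\<tau>}" "\<rho> \<in> bnd \<tau>" "\<rho> \<noteq> \<nu>"
  shows "stage \<rho> < stage \<nu>"
proof -
  have "\<tau> \<in> C" using assms(1) V_subset_upper upper_subset by blast
  moreover have "\<tau> \<notin> V \<rho>" using assms(1,3) V_inj by blast
  moreover have "stage \<tau> = stage \<nu>" using assms(1) stage_V by simp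
  ultimately show ?thesis using stage_bnd[of \<tau> \<rho>] assms(2) by auto
qed

lemma stage_V_bnd:
  assumes "\<nu> \<in> C" "\<rho> \<in> bnd \<nu>" "x \<in> V \<rho>" "\<nu> \<notin> V \<rho>"
  shows "stage x < stage \<nu>"
  using stage_bnd[OF assms(1,2)] stage_V[OF assms(3)] assms(4) by simp

lemma lin_bnd_eq_empty_iff:
  assumes "\<sigma> \<in> bnd \<tau>"
  shows "lin f (bnd \<tau>) = {} \<longleftrightarrow> f \<sigma> = lin f (bnd \<tau> - {\<sigma>})"
  using lin_remove[OF finite_bnd assms] by (simp add: sdiff_eq_empty_iff)

text \<open>
  The defining conditions of a reference map say that it is a fixed point of \<open>ref_step\<close>, which
  determines the value at a lower cell from the values at cells of smaller stage.
\<close>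
definition ref_step :: "('v set \<Rightarrow> 'v set set) \<Rightarrow> 'v set \<Rightarrow> 'v set set" where
  "ref_step g \<nu> =
     (if \<nu> \<in> crit then {\<nu>} else if \<nu> \<in> lower then lin g (\<Union>\<tau>\<in>V \<nu>. bnd \<tau> - {\<nu>}) else {})"

lemma ref_step_outside: "\<nu> \<notin> C \<Longrightarrow> ref_step g \<nu> = {}"
  using crit_subset lower_subset by (auto simp: ref_step_def)

lemma ref_step_agree:
  assumes "\<And>\<mu>. \<mu> \<in> C \<Longrightarrow> stage \<mu> < k \<Longrightarrow> g \<mu> = h \<mu>" "stage \<nu> < Suc k"
  shows "ref_step g \<nu> = ref_step h \<nu>"
proof (cases "\<nu> \<in> lower \<and> \<nu> \<notin> crit")
  case True
  then obtain \<tau> where \<tau>: "V \<nu> = {\<tau>}" using V_lower by blast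
  have "lin g (bnd \<tau> - {\<nu>}) = lin h (bnd \<tau> - {\<nu>})"
  proof (rule lin_cong)
    fix \<rho> assume "\<rho> \<in> bnd \<tau> - {\<nu>}"
    then show "g \<rho> = h \<rho>"
      using stage_bnd_partner[OF \<tau>, of \<rho>] bnd_subset assms by force
  qed
  then show ?thesis using True \<tau> by (simp add: ref_step_def)
qed (auto simp: ref_step_def)

lemma ref_step_pow_agree: "stage \<nu> < n \<Longrightarrow> (ref_step ^^ n) g \<nu> = (ref_step ^^ n) h \<nu>"
proof (induction n arbitrary: \<nu>)
  case (Suc n)
  then show ?case using ref_step_agree[of n "(ref_step ^^ n) g" "(ref_step ^^ n) h" \<nu>] by simp
qed simp

lemma ref_step_fixpoint_unique:
  assumes "ref_step f = f" "ref_step g = g"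
  shows "f = g"
proof
  fix \<nu>
  have "(ref_step ^^ n) f = f" "(ref_step ^^ n) g = g" for n
    by (induction n) (simp_all add: assms)
  then show "f \<nu> = g \<nu>"
    using ref_step_pow_agree[OF stage_less] ref_step_outside assms by metis
qed

lemma ref_step_graded:
  assumes "\<And>\<mu>. \<mu> \<in> C \<Longrightarrow> g \<mu> \<subseteq> crit \<inter> {x\<in>C. grade x = grade \<mu>}" "\<nu> \<in> C"
  shows "ref_step g \<nu> \<subseteq> crit \<inter> {x\<in>C. grade x = grade \<nu>}"
proof (cases "\<nu> \<in> lower \<and> \<nu> \<notin> crit")
  case True
  then obtain \<tau> where \<tau>: "V \<nu> = {\<tau>}" "\<nu> \<in> bnd \<tau>" using V_lower by blast
  have "ref_step g \<nu> \<subseteq> (\<Union>\<rho>\<in>bnd \<tau> - {\<nu>}. g \<rho>)"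
    using True \<tau> lin_subset_UN by (simp add: ref_step_def)
  also have "\<dots> \<subseteq> crit \<inter> {x\<in>C. grade x = grade \<nu>}"
    using assms(1) bnd_subset grade_bnd[OF _ \<tau>(2)] by fastforce
  finally show ?thesis .
qed (use assms(2) crit_subset in \<open>auto simp: ref_step_def\<close>)

lemma is_reference_map_on_iff:
  "is_reference_map_on C crit upper bnd grade f \<longleftrightarrow>
     ref_step f = f \<and> (\<forall>\<nu>\<in>C. f \<nu> \<subseteq> crit \<inter> {x\<in>C. grade x = grade \<nu>})"
proof
  assume ref: "is_reference_map_on C crit upper bnd grade f"
  have "ref_step f \<nu> = f \<nu>" for \<nu>
  proof -
    consider "\<nu> \<in> crit" | "\<nu> \<in> lower" | "\<nu> \<in> upper" | "\<nu> \<notin> C"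
      using cells_partition by blast
    then show ?thesis
    proof cases
      case 2
      then obtain \<tau> where \<tau>: "V \<nu> = {\<tau>}" "\<tau> \<in> upper" "\<nu> \<in> bnd \<tau>" using V_lower by blast
      then have "f \<nu> = lin f (bnd \<tau> - {\<nu>})"
        using is_reference_map_onD(5)[OF ref \<tau>(2)] lin_bnd_eq_empty_iff[OF \<tau>(3)] by simp
      then show ?thesis using 2 \<tau> crit_lower_disjoint by (auto simp: ref_step_def)
    qed (use crit_lower_disjoint crit_upper_disjoint lower_upper_disjoint
           is_reference_map_onD[OF ref] ref_step_outside in \<open>auto simp: ref_step_def\<close>)
  qed
  then show "ref_step f = f \<and> (\<forall>\<nu>\<in>C. f \<nu> \<subseteq> crit \<inter> {x\<in>C. grade x = grade \<nu>})"
    using is_reference_map_onD(2)[OF ref] by auto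
next
  assume ref: "ref_step f = f \<and> (\<forall>\<nu>\<in>C. f \<nu> \<subseteq> crit \<inter> {x\<in>C. grade x = grade \<nu>})"
  then have fixed: "f \<nu> = ref_step f \<nu>" for \<nu> by simp
  have "lin f (bnd \<tau>) = {}" if \<tau>: "\<tau> \<in> upper" for \<tau>
  proof -
    obtain \<sigma> where \<sigma>: "\<sigma> \<in> lower" "V \<sigma> = {\<tau>}" "\<sigma> \<in> bnd \<tau>"
      by (rule upper_matched[OF \<tau>])
    then have "f \<sigma> = lin f (bnd \<tau> - {\<sigma>})"
      using fixed[of \<sigma>] crit_lower_disjoint by (auto simp: ref_step_def)
    then show ?thesis using lin_bnd_eq_empty_iff[OF \<sigma>(3)] by simp
  qed
  moreover have "f \<nu> = {}" if "\<nu> \<notin> C" for \<nu>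
    using fixed[of \<nu>] ref_step_outside[OF that] by simp
  moreover have "f \<nu> = {\<nu>}" if "\<nu> \<in> crit" for \<nu>
    using fixed[of \<nu>] that by (simp add: ref_step_def)
  moreover have "f \<tau> = {}" if "\<tau> \<in> upper" for \<tau>
    using fixed[of \<tau>] that crit_upper_disjoint lower_upper_disjoint by (auto simp: ref_step_def)
  ultimately show "is_reference_map_on C crit upper bnd grade f"
    unfolding is_reference_map_on_def using ref by blast
qed

lemma ex1_reference_map_on: "\<exists>!f. is_reference_map_on C crit upper bnd grade f"
proof -
  define f where "f = (ref_step ^^ Suc N) (\<lambda>_. {})"
  have "ref_step f = (ref_step ^^ Suc N) (ref_step (\<lambda>_. {}))"
    unfolding f_def by (metis funpow_Suc_right funpow_swap1 o_apply)
  also have "\<dots> = f"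
  proof
    fix \<nu>
    show "(ref_step ^^ Suc N) (ref_step (\<lambda>_. {})) \<nu> = f \<nu>"
    proof (cases "\<nu> \<in> C")
      case True
      then have "stage \<nu> < Suc N" using stage_less less_SucI by blast
      then show ?thesis unfolding f_def by (rule ref_step_pow_agree)
    qed (simp add: f_def ref_step_outside)
  qed
  finally have "ref_step f = f" .
  moreover have "\<forall>\<nu>\<in>C. (ref_step ^^ n) (\<lambda>_. {}) \<nu> \<subseteq> crit \<inter> {x\<in>C. grade x = grade \<nu>}" for n
  proof (induction n)
    case (Suc n)
    then show ?case using ref_step_graded[of "(ref_step ^^ n) (\<lambda>_. {})"] by simp
  qed simp
  ultimately have "is_reference_map_on C crit upper bnd grade f"
    unfolding is_reference_map_on_iff f_def by blast
  then show ?thesis using ref_step_fixpoint_unique is_reference_map_on_iff by blast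
qed

definition flow_cell :: "'v set \<Rightarrow> 'v set set" where
  "flow_cell \<nu> = sdiff (sdiff {\<nu>} (lin bnd (V \<nu>))) (lin V (bnd \<nu>))"

abbreviation \<Phi> :: "'v set set \<Rightarrow> 'v set set" where
  "\<Phi> \<equiv> gradient_flow bnd V"

lemma gradient_flow_eq: "\<Phi> = lin flow_cell"
  unfolding gradient_flow_def flow_cell_def ..

lemma lin_V: "lin V c = (\<Union>\<nu>\<in>c. V \<nu>)"
  by (rule lin_disjoint_eq_UN) (use V_inj in blast)

lemma finite_flow_cell [simp]: "finite (flow_cell \<nu>)"
  unfolding flow_cell_def by (simp add: finite_lin)

lemma flow_cell_subset: "\<nu> \<in> C \<Longrightarrow> flow_cell \<nu> \<subseteq> C"
  unfolding flow_cell_def lin_V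
  using lin_subset_UN[of bnd "V \<nu>"] bnd_subset V_subset_upper upper_subset
  by (intro sdiff_subset) blast+

lemma flow_cell_lower:
  assumes "V \<sigma> = {\<tau>}" "\<sigma> \<in> bnd \<tau>"
  shows "flow_cell \<sigma> = sdiff (bnd \<tau> - {\<sigma>}) (\<Union>\<rho>\<in>bnd \<sigma>. V \<rho>)"
  unfolding flow_cell_def lin_V using assms by (simp add: sdiff_singleton_mem)

lemma flow_cell_not_lower: "\<nu> \<notin> lower \<Longrightarrow> flow_cell \<nu> = sdiff {\<nu>} (\<Union>\<rho>\<in>bnd \<nu>. V \<rho>)"
  unfolding flow_cell_def lin_V by (simp add: V_not_lower)

text \<open>In an upper cell the term coming from its lower partner cancels the cell itself.\<close>
lemma flow_cell_upper_eq:
  assumes "\<tau> \<in> upper"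
  shows "flow_cell \<tau> = (\<Union>\<rho>\<in>bnd \<tau>. V \<rho>) - {\<tau>}"
proof -
  obtain \<sigma> where "\<sigma> \<in> lower" "V \<sigma> = {\<tau>}" "\<sigma> \<in> bnd \<tau>" by (rule upper_matched[OF assms])
  then have "\<tau> \<in> (\<Union>\<rho>\<in>bnd \<tau>. V \<rho>)" by blast
  moreover have "\<tau> \<notin> lower" using assms lower_upper_disjoint by blast
  ultimately show ?thesis using flow_cell_not_lower[of \<tau>] by (simp add: sdiff_singleton_mem)
qed

lemma flow_cell_upper: "\<tau> \<in> upper \<Longrightarrow> flow_cell \<tau> \<subseteq> upper"
  using flow_cell_upper_eq V_subset_upper by blast

lemma stage_flow_cell:
  assumes "\<nu> \<in> C" "\<nu> \<notin> crit" "x \<in> flow_cell \<nu>"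
  shows "stage x < stage \<nu>"
proof (cases "\<nu> \<in> lower")
  case True
  then obtain \<tau> where \<tau>: "V \<nu> = {\<tau>}" "\<nu> \<in> bnd \<tau>" using V_lower by blast
  have "x \<in> bnd \<tau> - {\<nu>} \<or> (\<exists>\<rho>\<in>bnd \<nu>. x \<in> V \<rho>)"
    using assms(3) flow_cell_lower[OF \<tau>] by (auto simp: sdiff_def)
  moreover have "\<nu> \<notin> V \<rho>" for \<rho> using True V_subset_upper lower_upper_disjoint by blast
  ultimately show ?thesis
    using stage_bnd_partner[OF \<tau>(1)] stage_V_bnd[OF assms(1)] by blast
next
  case False
  then have "\<nu> \<in> upper" using assms(1,2) cells_partition by blast
  then obtain \<rho> where "\<rho> \<in> bnd \<nu>" "x \<in> V \<rho>" "x \<noteq> \<nu>"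
    using assms(3) flow_cell_upper_eq by blast
  then show ?thesis using stage_V_bnd[OF assms(1)] V_eq_singleton(1) by blast
qed

lemma flow_cell_crit: "\<kappa> \<in> crit \<Longrightarrow> flow_cell \<kappa> = sdiff {\<kappa>} (\<Union>\<rho>\<in>bnd \<kappa>. V \<rho>)"
  using crit_lower_disjoint flow_cell_not_lower by blast

lemma stage_V_bnd_crit: "\<kappa> \<in> crit \<Longrightarrow> \<rho> \<in> bnd \<kappa> \<Longrightarrow> x \<in> V \<rho> \<Longrightarrow> stage x < stage \<kappa>"
  using stage_V_bnd crit_subset V_subset_upper crit_upper_disjoint by blast

lemma flow_subset: "c \<subseteq> C \<Longrightarrow> \<Phi> c \<subseteq> C"
  unfolding gradient_flow_eq using lin_subset_UN flow_cell_subset by blast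

lemma flow_subset_upper: "c \<subseteq> upper \<Longrightarrow> \<Phi> c \<subseteq> upper"
  unfolding gradient_flow_eq using lin_subset_UN flow_cell_upper by blast

lemma flow_pow_subset: "c \<subseteq> C \<Longrightarrow> (\<Phi> ^^ n) c \<subseteq> C"
  using funpow_invariant[where P = "\<lambda>x. x \<subseteq> C"] flow_subset by blast

lemma flow_pow_subset_upper: "c \<subseteq> upper \<Longrightarrow> (\<Phi> ^^ n) c \<subseteq> upper"
  using funpow_invariant[where P = "\<lambda>x. x \<subseteq> upper"] flow_subset_upper by blast

lemma flow_sdiff: "a \<subseteq> C \<Longrightarrow> b \<subseteq> C \<Longrightarrow> \<Phi> (sdiff a b) = sdiff (\<Phi> a) (\<Phi> b)"
  unfolding gradient_flow_eq by (intro lin_sdiff finite_subset_cells)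

lemma flow_pow_sdiff:
  assumes "a \<subseteq> C" "b \<subseteq> C"
  shows "(\<Phi> ^^ n) (sdiff a b) = sdiff ((\<Phi> ^^ n) a) ((\<Phi> ^^ n) b)"
proof (induction n)
  case (Suc n)
  then show ?case using flow_pow_subset assms by (simp add: flow_sdiff)
qed simp

lemma flow_expand:
  assumes "finite c"
  shows "\<Phi> c = sdiff (sdiff c (lin bnd (lin V c))) (lin V (lin bnd c))"
  unfolding gradient_flow_def
  by (simp add: assms lin_sdiff_fun lin_singleton_fun lin_lin)

lemma stage_maximal:
  assumes "c \<subseteq> C" "c \<noteq> {}"
  obtains \<nu> where "\<nu> \<in> c" "\<And>\<mu>. \<mu> \<in> c \<Longrightarrow> stage \<mu> \<le> stage \<nu>"
proof -
  obtain k where "k \<in> c" using assms(2) by blast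
  then show ?thesis
    using ex_has_greatest_nat[of "\<lambda>\<nu>. \<nu> \<in> c" k stage N] that assms(1) stage_less by blast
qed

text \<open>A cell of maximal stage in a nonzero fixed chain cannot be produced by the flow.\<close>
lemma fixed_chain_eq_empty:
  assumes "x \<subseteq> C" "\<Phi> x = x" "x \<inter> crit = {}"
  shows "x = {}"
proof (rule ccontr)
  assume "x \<noteq> {}"
  then obtain \<nu> where \<nu>: "\<nu> \<in> x" "\<And>\<mu>. \<mu> \<in> x \<Longrightarrow> stage \<mu> \<le> stage \<nu>"
    using stage_maximal assms(1) by blast
  have "\<nu> \<in> lin flow_cell x" using assms(2) \<nu>(1) by (simp add: gradient_flow_eq)
  then obtain \<mu> where "\<mu> \<in> x" "\<nu> \<in> flow_cell \<mu>" using lin_subset_UN by blast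
  moreover have "\<mu> \<in> C" "\<mu> \<notin> crit" using \<open>\<mu> \<in> x\<close> assms(1,3) by blast+
  ultimately have "stage \<nu> < stage \<mu>" using stage_flow_cell by blast
  then show False using \<nu>(2)[OF \<open>\<mu> \<in> x\<close>] by simp
qed

lemma fixed_chain_disjoint_lower:
  assumes "x \<subseteq> C" "\<Phi> x = x"
  shows "x \<inter> lower = {}"
proof (rule ccontr)
  assume "x \<inter> lower \<noteq> {}"
  moreover have "x \<inter> lower \<subseteq> C" using assms(1) by blast
  ultimately obtain \<sigma> where "\<sigma> \<in> x \<inter> lower"
    and max: "\<And>\<sigma>'. \<sigma>' \<in> x \<inter> lower \<Longrightarrow> stage \<sigma>' \<le> stage \<sigma>"
    using stage_maximal by metis
  then have \<sigma>: "\<sigma> \<in> x" "\<sigma> \<in> lower" by simp_all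
  obtain \<tau> where \<tau>: "V \<sigma> = {\<tau>}" "\<sigma> \<in> bnd \<tau>" using V_lower \<sigma>(2) by blast
  have only_\<tau>: "\<tau>' = \<tau>" if "\<sigma>' \<in> x" "\<tau>' \<in> V \<sigma>'" "\<sigma> \<in> bnd \<tau>'" for \<sigma>' \<tau>'
  proof -
    have "\<tau>' \<in> C" using that(2) V_subset_upper upper_subset by blast
    moreover have "stage \<tau>' \<le> stage \<sigma>"
      using max[OF IntI[OF that(1) lower_if_V[OF that(2)]]] stage_V[OF that(2)] by simp
    ultimately have "\<tau>' \<in> V \<sigma>" using stage_bnd[OF _ that(3)] by fastforce
    then show ?thesis using \<tau>(1) by simp
  qed
  have "{\<tau>'\<in>lin V x. \<sigma> \<in> bnd \<tau>'} = {\<tau>}"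
    unfolding lin_V using only_\<tau> \<sigma>(1) \<tau> by blast
  then have "\<sigma> \<in> lin bnd (lin V x)" by (simp add: mem_lin_iff)
  moreover have "lin V (lin bnd x) \<subseteq> upper" unfolding lin_V using V_subset_upper by blast
  ultimately have "\<sigma> \<notin> \<Phi> x"
    using \<sigma> lower_upper_disjoint unfolding flow_expand[OF finite_subset_cells[OF assms(1)]]
    by (auto simp: sdiff_def)
  then show False using assms(2) \<sigma>(1) by simp
qed

lemma stabilizes_sdiff:
  assumes "a \<subseteq> C" "b \<subseteq> C" "stabilizes \<Phi> a" "stabilizes \<Phi> b"
  shows "stabilizes \<Phi> (sdiff a b)"
proof -
  obtain na nb where na: "(\<Phi> ^^ Suc na) a = (\<Phi> ^^ na) a" and nb: "(\<Phi> ^^ Suc nb) b = (\<Phi> ^^ nb) b"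
    using assms(3,4) unfolding stabilizes_def by blast
  define n where "n = max na nb"
  have "(\<Phi> ^^ Suc n) a = (\<Phi> ^^ n) a"
    using funpow_fixed_from[OF na, of n] funpow_fixed_from[OF na, of "Suc n"] by (simp add: n_def)
  moreover have "(\<Phi> ^^ Suc n) b = (\<Phi> ^^ n) b"
    using funpow_fixed_from[OF nb, of n] funpow_fixed_from[OF nb, of "Suc n"] by (simp add: n_def)
  ultimately show ?thesis unfolding stabilizes_def using flow_pow_sdiff[OF assms(1,2)] by metis
qed

lemma stabilizes_chain:
  assumes "c \<subseteq> C" "\<And>\<nu>. \<nu> \<in> c \<Longrightarrow> stabilizes \<Phi> {\<nu>}"
  shows "stabilizes \<Phi> c"
  using finite_subset_cells[OF assms(1)] assms
proof (induction c rule: finite_induct)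
  case empty
  have "(\<Phi> ^^ Suc 0) {} = (\<Phi> ^^ 0) {}" by (simp add: gradient_flow_eq)
  then show ?case unfolding stabilizes_def by blast
next
  case (insert \<nu> c)
  have "insert \<nu> c = sdiff {\<nu>} c" using insert(2) by (auto simp: sdiff_def)
  moreover have "stabilizes \<Phi> (sdiff {\<nu>} c)"
    using insert.prems insert.IH by (intro stabilizes_sdiff) auto
  ultimately show ?case by simp
qed

text \<open>
  The flow of a critical cell \<open>\<kappa>\<close> is \<open>\<kappa> + u\<close> with \<open>u\<close> earlier upper cells; the flow of \<open>u\<close>
  stabilizes at a fixed chain of upper cells, i.e.\ at zero.
\<close>
lemma stabilizes_cell: "\<nu> \<in> C \<Longrightarrow> stabilizes \<Phi> {\<nu>}"
proof (induction "stage \<nu>" arbitrary: \<nu> rule: less_induct)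
  case less
  show ?case
  proof (cases "\<nu> \<in> crit")
    case True
    define u where "u = (\<Union>\<rho>\<in>bnd \<nu>. V \<rho>)"
    have u: "flow_cell \<nu> = sdiff {\<nu>} u" "u \<subseteq> upper"
      unfolding u_def using flow_cell_crit[OF True] V_subset_upper by blast+
    have "u \<subseteq> C" using u(2) upper_subset by blast
    then have "stabilizes \<Phi> u"
    proof (rule stabilizes_chain)
      fix x assume "x \<in> u"
      then show "stabilizes \<Phi> {x}"
        using less.hyps stage_V_bnd_crit[OF True] \<open>u \<subseteq> C\<close> unfolding u_def by blast
    qed
    then obtain n where n: "\<Phi> ((\<Phi> ^^ n) u) = (\<Phi> ^^ n) u" unfolding stabilizes_def by auto
    have "(\<Phi> ^^ n) u \<inter> crit = {}" using flow_pow_subset_upper[OF u(2)] crit_upper_disjoint by blast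
    then have zero: "(\<Phi> ^^ n) u = {}"
      using fixed_chain_eq_empty[OF flow_pow_subset[OF \<open>u \<subseteq> C\<close>] n] by blast
    have "(\<Phi> ^^ Suc n) {\<nu>} = (\<Phi> ^^ n) (sdiff {\<nu>} u)"
      using u(1) by (simp only: funpow_Suc_right o_apply gradient_flow_eq lin_singleton)
    also have "\<dots> = (\<Phi> ^^ n) {\<nu>}" using flow_pow_sdiff[of "{\<nu>}" u n] less.prems \<open>u \<subseteq> C\<close> zero by simp
    finally show ?thesis unfolding stabilizes_def by blast
  next
    case False
    have "stabilizes \<Phi> (flow_cell \<nu>)"
    proof (rule stabilizes_chain)
      show "flow_cell \<nu> \<subseteq> C" using flow_cell_subset[OF less.prems] .
      fix x assume "x \<in> flow_cell \<nu>"
      then show "stabilizes \<Phi> {x}"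
        using less.hyps stage_flow_cell[OF less.prems False] \<open>flow_cell \<nu> \<subseteq> C\<close> by blast
    qed
    then obtain n where "(\<Phi> ^^ Suc n) (\<Phi> {\<nu>}) = (\<Phi> ^^ n) (\<Phi> {\<nu>})"
      unfolding stabilizes_def by (auto simp: gradient_flow_eq)
    then have "(\<Phi> ^^ Suc (Suc n)) {\<nu>} = (\<Phi> ^^ Suc n) {\<nu>}" by (simp only: funpow_Suc_right o_apply)
    then show ?thesis unfolding stabilizes_def by blast
  qed
qed

lemma stabilizes: "c \<subseteq> C \<Longrightarrow> stabilizes \<Phi> c"
  using stabilizes_chain stabilizes_cell by blast

context
  fixes f assumes ref: "is_reference_map_on C crit upper bnd grade f"
begin

lemma reference_subset_crit: "f \<nu> \<subseteq> crit"
  using is_reference_map_onD(1,2)[OF ref] by (cases "\<nu> \<in> C") auto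

lemma lin_reference_flow_cell: "lin f (flow_cell \<nu>) = f \<nu>"
proof -
  have "lin f (lin bnd (V \<nu>)) = {}"
    using is_reference_map_onD(5)[OF ref] V_subset_upper
    by (simp add: lin_lin lin_eq_empty subset_iff)
  moreover have "lin f (lin V (bnd \<nu>)) = {}"
    using is_reference_map_onD(4)[OF ref] V_subset_upper
    by (simp add: lin_lin lin_eq_empty subset_iff)
  ultimately show ?thesis
    unfolding flow_cell_def by (simp add: lin_sdiff finite_lin)
qed

lemma lin_reference_flow: "c \<subseteq> C \<Longrightarrow> lin f (\<Phi> c) = lin f c"
  unfolding gradient_flow_eq
  by (simp add: lin_lin finite_subset_cells lin_reference_flow_cell)

lemma lin_reference_flow_pow: "c \<subseteq> C \<Longrightarrow> lin f ((\<Phi> ^^ n) c) = lin f c"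
  by (induction n) (simp_all add: lin_reference_flow flow_pow_subset)

lemma lin_reference_fixed_chain:
  assumes "x \<subseteq> C" "\<Phi> x = x"
  shows "lin f x = x \<inter> crit"
proof -
  have "x \<inter> lower = {}" by (rule fixed_chain_disjoint_lower[OF assms])
  have "f \<mu> = (if \<mu> \<in> crit then {\<mu>} else {})" if "\<mu> \<in> x" for \<mu>
  proof (cases "\<mu> \<in> crit")
    case False
    then have "\<mu> \<in> upper" using that \<open>x \<inter> lower = {}\<close> assms(1) cells_partition by blast
    then show ?thesis using False is_reference_map_onD(4)[OF ref] by simp
  qed (simp add: is_reference_map_onD(3)[OF ref])
  then have "lin f x = lin (\<lambda>\<mu>. if \<mu> \<in> crit then {\<mu>} else {}) x" by (rule lin_cong)
  also have "\<dots> = x \<inter> crit" by (subst lin_disjoint_eq_UN) (auto split: if_split_asm)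
  finally show ?thesis .
qed

end

context
  fixes g assumes coref: "is_reference_map_on C crit lower cobnd grade g"
begin

lemma ext_map_subset: "ext_map C g \<kappa> \<subseteq> C"
  unfolding ext_map_def by blast

lemma finite_ext_map [simp]: "finite (ext_map C g \<kappa>)"
  using ext_map_subset finite_subset_cells by blast

lemma ext_map_disjoint_lower: "\<nu> \<in> ext_map C g \<kappa> \<Longrightarrow> \<nu> \<notin> lower"
  unfolding ext_map_def using is_reference_map_onD(4)[OF coref] by fastforce

lemma crit_mem_ext_map_iff: "x \<in> crit \<Longrightarrow> x \<in> ext_map C g \<kappa> \<longleftrightarrow> x = \<kappa>"
  unfolding ext_map_def using is_reference_map_onD(3)[OF coref] crit_subset by auto

text \<open>
  By duality, the boundary of \<open>ext_map C g \<kappa>\<close> at a lower cell \<open>\<sigma>\<close> is read off from \<open>g\<close> on the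
  coboundary of \<open>\<sigma>\<close>.
\<close>
lemma lower_notin_lin_bnd_ext_map:
  assumes "\<sigma> \<in> lower"
  shows "\<sigma> \<notin> lin bnd (ext_map C g \<kappa>)"
proof -
  have "\<sigma> \<in> C" using assms lower_subset by blast
  then have "{\<nu>\<in>ext_map C g \<kappa>. \<sigma> \<in> bnd \<nu>} = {\<nu>\<in>cobnd \<sigma>. \<kappa> \<in> g \<nu>}"
    unfolding ext_map_def using bnd_cobnd_iff cobnd_subset by blast
  moreover have "\<kappa> \<notin> lin g (cobnd \<sigma>)" using is_reference_map_onD(5)[OF coref assms] by simp
  ultimately show ?thesis unfolding mem_lin_iff by simp
qed

lemma flow_ext_map: "\<Phi> (ext_map C g \<kappa>) = ext_map C g \<kappa>"
proof -
  have "lin V (ext_map C g \<kappa>) = {}"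
    by (rule lin_eq_empty) (use ext_map_disjoint_lower V_not_lower in blast)
  moreover have "lin V (lin bnd (ext_map C g \<kappa>)) = {}"
    by (rule lin_eq_empty) (use lower_notin_lin_bnd_ext_map V_not_lower in blast)
  ultimately show ?thesis by (simp add: flow_expand)
qed

lemma flow_lin_ext_map:
  assumes "finite S"
  shows "\<Phi> (lin (ext_map C g) S) = lin (ext_map C g) S"
proof -
  have "\<Phi> (lin (ext_map C g) S) = lin (\<lambda>\<kappa>. \<Phi> (ext_map C g \<kappa>)) S"
    unfolding gradient_flow_eq using assms by (rule lin_lin) simp
  then show ?thesis by (simp add: flow_ext_map)
qed

lemma lin_ext_map_inter_crit:
  assumes "S \<subseteq> crit"
  shows "lin (ext_map C g) S \<inter> crit = S"
proof (rule set_eqI)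
  fix x
  show "x \<in> lin (ext_map C g) S \<inter> crit \<longleftrightarrow> x \<in> S"
  proof (cases "x \<in> crit")
    case True
    then have hits: "{\<kappa>\<in>S. x \<in> ext_map C g \<kappa>} = S \<inter> {x}" using crit_mem_ext_map_iff by blast
    show ?thesis unfolding Int_iff mem_lin_iff hits using True by (cases "x \<in> S") simp_all
  qed (use assms in blast)
qed

end

theorem stable_limit_flow_eq:
  assumes "is_reference_map_on C crit upper bnd grade f"
    and "is_reference_map_on C crit lower cobnd grade g"
    and "c \<subseteq> C"
  shows "stable_limit \<Phi> c = lin (ext_map C g) (lin f c)"
proof -
  define x where "x = stable_limit \<Phi> c"
  define y where "y = lin (ext_map C g) (lin f c)"
  obtain n where x_pow: "x = (\<Phi> ^^ n) c" unfolding x_def by (rule stable_limit_funpow)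
  have x_fixed: "\<Phi> x = x" unfolding x_def by (rule stable_limit_fixed[OF stabilizes[OF assms(3)]])
  have "x \<subseteq> C" unfolding x_pow by (rule flow_pow_subset[OF assms(3)])
  have "lin f c \<subseteq> crit"
    using lin_subset_UN[of f c] reference_subset_crit[OF assms(1)] by blast
  then have "finite (lin f c)" using crit_subset finite_subset_cells[of "lin f c"] by blast
  have y_fixed: "\<Phi> y = y" unfolding y_def by (rule flow_lin_ext_map[OF assms(2) \<open>finite (lin f c)\<close>])
  have "y \<subseteq> C"
    unfolding y_def using lin_subset_UN[of "ext_map C g" "lin f c"] ext_map_subset[OF assms(2)]
    by blast
  have "x \<inter> crit = lin f c"
    using lin_reference_fixed_chain[OF assms(1) \<open>x \<subseteq> C\<close> x_fixed]
      lin_reference_flow_pow[OF assms(1,3)] x_pow by simp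
  moreover have "y \<inter> crit = lin f c"
    unfolding y_def by (rule lin_ext_map_inter_crit[OF assms(2) \<open>lin f c \<subseteq> crit\<close>])
  ultimately have "sdiff x y \<inter> crit = {}" by (auto simp: sdiff_def)
  moreover have "\<Phi> (sdiff x y) = sdiff x y"
    using x_fixed y_fixed flow_sdiff[OF \<open>x \<subseteq> C\<close> \<open>y \<subseteq> C\<close>] by simp
  moreover have "sdiff x y \<subseteq> C" using \<open>x \<subseteq> C\<close> \<open>y \<subseteq> C\<close> by (rule sdiff_subset)
  ultimately have "sdiff x y = {}" using fixed_chain_eq_empty by blast
  then show ?thesis unfolding x_def y_def by (simp add: sdiff_eq_empty_iff)
qed

lemma dual_morse_matching:
  "morse_matching C crit upper lower cobnd bnd (\<lambda>\<tau>. {\<sigma>. \<tau> \<in> V \<sigma>}) (\<lambda>\<nu>. N - stage \<nu>) grade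
     (Suc N)"
proof
  show "\<exists>\<sigma>. {\<sigma>. \<tau> \<in> V \<sigma>} = {\<sigma>} \<and> \<sigma> \<in> lower \<and> \<tau> \<in> cobnd \<sigma>" if \<tau>: "\<tau> \<in> upper" for \<tau>
  proof -
    obtain \<sigma> where \<sigma>: "\<sigma> \<in> lower" "V \<sigma> = {\<tau>}" "\<sigma> \<in> bnd \<tau>" by (rule upper_matched[OF \<tau>])
    then have "{\<sigma>. \<tau> \<in> V \<sigma>} = {\<sigma>}" using V_inj[of \<tau> _ \<sigma>] by auto
    moreover have "\<tau> \<in> cobnd \<sigma>"
      using \<sigma> \<tau> bnd_cobnd_iff lower_subset upper_subset by blast
    ultimately show ?thesis using \<sigma>(1) by blast
  qed
  show "N - stage \<rho> < N - stage \<nu> \<or> \<nu> \<in> {\<sigma>. \<rho> \<in> V \<sigma>}" if "\<nu> \<in> C" "\<rho> \<in> cobnd \<nu>" for \<nu> \<rho>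
  proof -
    have "\<rho> \<in> C" using that(2) cobnd_subset by blast
    then have "stage \<nu> < stage \<rho> \<or> \<rho> \<in> V \<nu>"
      using stage_bnd[OF \<open>\<rho> \<in> C\<close>] bnd_cobnd_iff[OF \<open>\<rho> \<in> C\<close> that(1)] that(2) by blast
    then show ?thesis using stage_less[OF \<open>\<rho> \<in> C\<close>] by auto
  qed
  show "a = b" if "x \<in> {\<sigma>. a \<in> V \<sigma>}" "x \<in> {\<sigma>. b \<in> V \<sigma>}" for a b x
    using that V_eq_singleton(1) by blast
  show "{\<sigma>. \<nu> \<in> V \<sigma>} = {}" if "\<nu> \<notin> upper" for \<nu>
    using that V_subset_upper by blast
  show "\<exists>\<sigma>. \<tau> \<in> {\<sigma>'. \<sigma> \<in> V \<sigma>'}" if "\<tau> \<in> lower" for \<tau>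
    using V_lower[OF that] by blast
  show "N - stage \<tau> = N - stage \<sigma>" if "\<tau> \<in> {\<sigma>'. \<sigma> \<in> V \<sigma>'}" for \<sigma> \<tau>
    using that stage_V by simp
  show "\<sigma> \<in> cobnd \<nu> \<longleftrightarrow> \<nu> \<in> bnd \<sigma>" if "\<nu> \<in> C" "\<sigma> \<in> C" for \<nu> \<sigma>
    using bnd_cobnd_iff[OF that(2,1)] by simp
  show "N - stage \<nu> < Suc N" for \<nu> by simp
  show "crit \<union> upper \<union> lower = C" using cells_partition by blast
  show "upper \<inter> lower = {}" using lower_upper_disjoint by blast
qed (fact finite_cells crit_upper_disjoint crit_lower_disjoint bnd_subset cobnd_subset
       grade_bnd grade_cobnd)+

end

lemma simplicial_complex_subset_closed:
  "simplicial_complex P \<Longrightarrow> \<tau> \<in> P \<Longrightarrow> \<rho> \<noteq> {} \<Longrightarrow> \<rho> \<subseteq> \<tau> \<Longrightarrow> \<rho> \<in> P"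
  unfolding simplicial_complex_def by blast

lemma mem_prefix_complex_iff:
  "\<nu> \<in> prefix_complex W k \<longleftrightarrow> (\<exists>i<length W. i < k \<and> \<nu> \<in> added (W ! i))"
  unfolding prefix_complex_def by (auto simp: set_conv_nth)

definition step_index :: "'v step list \<Rightarrow> 'v set \<Rightarrow> nat" where
  "step_index W \<nu> = (THE i. i < length W \<and> \<nu> \<in> added (W ! i))"

context
  fixes K :: "'v set set" and W :: "'v step list"
  assumes morse: "morse_sequence K W"
begin

lemma complex_eq_UN_added: "K = (\<Union>s\<in>set W. added s)"
  using morse unfolding morse_sequence_def prefix_complex_def by simp

lemma simplicial_complex_prefix: "i \<le> length W \<Longrightarrow> simplicial_complex (prefix_complex W i)"
  using morse unfolding morse_sequence_def by blast

lemma simplicial_complex_K: "simplicial_complex K"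
  using simplicial_complex_prefix[of "length W"] morse unfolding morse_sequence_def by simp

lemma added_index_unique:
  assumes "i < length W" "j < length W" "\<nu> \<in> added (W ! i)" "\<nu> \<in> added (W ! j)"
  shows "i = j"
proof -
  have fresh: "\<nu> \<notin> prefix_complex W k" if "k < length W" "\<nu> \<in> added (W ! k)" for k
    using morse that unfolding morse_sequence_def by (cases "W ! k") auto
  show ?thesis
    using fresh[OF assms(1,3)] fresh[OF assms(2,4)] assms
    unfolding mem_prefix_complex_iff by (metis linorder_neqE_nat)
qed

lemma added_step_unique: "s \<in> set W \<Longrightarrow> s' \<in> set W \<Longrightarrow> \<nu> \<in> added s \<Longrightarrow> \<nu> \<in> added s' \<Longrightarrow> s = s'"
  by (metis added_index_unique in_set_conv_nth)

lemma step_index_eq: "i < length W \<Longrightarrow> \<nu> \<in> added (W ! i) \<Longrightarrow> step_index W \<nu> = i"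
  unfolding step_index_def using added_index_unique by blast

lemma step_index_added: "\<nu> \<in> K \<Longrightarrow> step_index W \<nu> < length W \<and> \<nu> \<in> added (W ! step_index W \<nu>)"
  using complex_eq_UN_added step_index_eq by (metis UN_E in_set_conv_nth)

lemma Expand_mem_bd:
  assumes "Expand \<sigma> \<tau> \<in> set W"
  shows "\<sigma> \<in> bd K \<tau>"
proof -
  obtain i where i: "i < length W" "W ! i = Expand \<sigma> \<tau>" using assms by (metis in_set_conv_nth)
  define P where "P = prefix_complex W (Suc i)"
  have free: "free_pair P \<sigma> \<tau>" using morse i unfolding morse_sequence_def P_def by force
  then have "\<sigma> \<subset> \<tau>" "\<tau> \<in> P" unfolding free_pair_def by blast+
  have "\<sigma> \<in> K" "\<tau> \<in> K" using assms complex_eq_UN_added by force+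
  then have "finite \<tau>" using simplicial_complex_K unfolding simplicial_complex_def by blast
  obtain x where x: "x \<in> \<tau>" "x \<notin> \<sigma>" using \<open>\<sigma> \<subset> \<tau>\<close> by blast
  \<comment> \<open>\<open>\<sigma>\<close> is a free face of \<open>\<tau>\<close>, so \<open>\<tau>\<close> is the only simplex strictly containing it\<close>
  have "insert x \<sigma> \<in> P"
    using simplicial_complex_subset_closed simplicial_complex_prefix i(1) \<open>\<tau> \<in> P\<close> x(1) \<open>\<sigma> \<subset> \<tau>\<close>
    unfolding P_def by (metis Suc_leI insert_not_empty insert_subset psubset_imp_subset)
  then have "insert x \<sigma> = \<tau>" using free x(2) unfolding free_pair_def by blast
  then have "card \<tau> = card \<sigma> + 1"
    using x(2) finite_subset[OF psubset_imp_subset[OF \<open>\<sigma> \<subset> \<tau>\<close>] \<open>finite \<tau>\<close>] by auto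
  then show ?thesis unfolding bd_def using \<open>\<sigma> \<in> K\<close> \<open>\<sigma> \<subset> \<tau>\<close> by simp
qed

lemma step_index_bd:
  assumes "\<nu> \<in> K" "\<rho> \<in> bd K \<nu>"
  shows "step_index W \<rho> < step_index W \<nu> \<or> \<nu> \<in> Vmap W \<rho>"
proof -
  define i where "i = step_index W \<nu>"
  have i: "i < length W" "\<nu> \<in> added (W ! i)"
    using step_index_added[OF assms(1)] unfolding i_def by blast+
  have "\<rho> \<subset> \<nu>" "\<rho> \<in> K" using assms(2) unfolding bd_def by blast+
  then have "\<rho> \<noteq> {}" using simplicial_complex_K unfolding simplicial_complex_def by blast
  have "\<nu> \<in> prefix_complex W (Suc i)" using i unfolding mem_prefix_complex_iff by blast
  then have "\<rho> \<in> prefix_complex W (Suc i)"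
    using simplicial_complex_subset_closed simplicial_complex_prefix i(1) \<open>\<rho> \<noteq> {}\<close> \<open>\<rho> \<subset> \<nu>\<close>
    by (metis Suc_leI psubset_imp_subset)
  then obtain j where j: "j < length W" "j \<le> i" "\<rho> \<in> added (W ! j)"
    unfolding mem_prefix_complex_iff by auto
  show ?thesis
  proof (cases "j = i")
    case True
    then have "W ! i = Expand \<rho> \<nu>"
      using i(2) j(3) \<open>\<rho> \<subset> \<nu>\<close> Expand_mem_bd nth_mem[OF i(1)]
      by (cases "W ! i") (auto simp: bd_def)
    then show ?thesis using nth_mem[OF i(1)] by (simp add: Vmap_def)
  next
    case False
    then show ?thesis using step_index_eq[OF j(1,3)] j(2) i_def by simp
  qed
qed

lemma critical_regular_partition:
  shows "critical W \<union> lower_regular W \<union> upper_regular W = K"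
    and "critical W \<inter> lower_regular W = {}"
    and "critical W \<inter> upper_regular W = {}"
    and "lower_regular W \<inter> upper_regular W = {}"
proof -
  show "critical W \<union> lower_regular W \<union> upper_regular W = K"
    unfolding complex_eq_UN_added critical_def lower_regular_def upper_regular_def
  proof (intro equalityI subsetI)
    fix \<nu> assume "\<nu> \<in> (\<Union>s\<in>set W. added s)"
    then obtain s where s: "s \<in> set W" "\<nu> \<in> added s" by blast
    show "\<nu> \<in> {\<nu>. Fill \<nu> \<in> set W} \<union> {\<sigma>. \<exists>\<tau>. Expand \<sigma> \<tau> \<in> set W} \<union> {\<tau>. \<exists>\<sigma>. Expand \<sigma> \<tau> \<in> set W}"
      by (cases s) (use s in auto)
  qed force
  have False if "Fill \<nu> \<in> set W" "Expand \<nu> \<tau> \<in> set W" for \<nu> \<tau>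
    using added_step_unique[OF that, of \<nu>] by simp
  then show "critical W \<inter> lower_regular W = {}" unfolding critical_def lower_regular_def by blast
  have False if "Fill \<nu> \<in> set W" "Expand \<sigma> \<nu> \<in> set W" for \<sigma> \<nu>
    using added_step_unique[OF that, of \<nu>] by simp
  then show "critical W \<inter> upper_regular W = {}" unfolding critical_def upper_regular_def by blast
  have "\<sigma> = \<nu> \<and> \<nu> = \<tau>" if "Expand \<nu> \<tau> \<in> set W" "Expand \<sigma> \<nu> \<in> set W" for \<sigma> \<nu> \<tau>
    using added_step_unique[OF that, of \<nu>] by simp
  moreover have "\<sigma> \<noteq> \<tau>" if "Expand \<sigma> \<tau> \<in> set W" for \<sigma> \<tau>
    using Expand_mem_bd[OF that] by (auto simp: bd_def)
  ultimately show "lower_regular W \<inter> upper_regular W = {}"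
    unfolding lower_regular_def upper_regular_def by blast
qed

lemma Vmap_lower_regular:
  assumes "\<sigma> \<in> lower_regular W"
  shows "\<exists>\<tau>. Vmap W \<sigma> = {\<tau>} \<and> \<tau> \<in> upper_regular W \<and> \<sigma> \<in> bd K \<tau>"
proof -
  obtain \<tau> where \<tau>: "Expand \<sigma> \<tau> \<in> set W" using assms unfolding lower_regular_def by blast
  have "\<tau>' = \<tau>" if "Expand \<sigma> \<tau>' \<in> set W" for \<tau>'
    using added_step_unique[OF that \<tau>, of \<sigma>] by simp
  then have "Vmap W \<sigma> = {\<tau>}" using \<tau> unfolding Vmap_def by blast
  then show ?thesis using \<tau> Expand_mem_bd[OF \<tau>] unfolding upper_regular_def by blast
qed

lemma step_index_Vmap:
  assumes "\<tau> \<in> Vmap W \<sigma>"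
  shows "step_index W \<tau> = step_index W \<sigma>"
proof -
  have "Expand \<sigma> \<tau> \<in> set W" using assms unfolding Vmap_def by simp
  then obtain i where "i < length W" "W ! i = Expand \<sigma> \<tau>" by (auto simp: in_set_conv_nth)
  then show ?thesis using step_index_eq[of i] by simp
qed

theorem morse_matching_of_morse_sequence:
  "morse_matching K (critical W) (lower_regular W) (upper_regular W) (bd K) (cobd K) (Vmap W)
     (step_index W) card (length W)"
proof
  show "finite K" using simplicial_complex_K unfolding simplicial_complex_def by blast
  show "bd K \<nu> \<subseteq> K" "cobd K \<nu> \<subseteq> K" for \<nu> unfolding bd_def cobd_def by blast+
  show "\<sigma> \<in> bd K \<nu> \<longleftrightarrow> \<nu> \<in> cobd K \<sigma>" if "\<nu> \<in> K" "\<sigma> \<in> K" for \<nu> \<sigma>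
    using that unfolding bd_def cobd_def by auto
  show "Vmap W \<nu> = {}" if "\<nu> \<notin> lower_regular W" for \<nu>
    using that unfolding Vmap_def lower_regular_def by blast
  show "a = b" if "x \<in> Vmap W a" "x \<in> Vmap W b" for a b x
    using that added_step_unique[of "Expand a x" "Expand b x" x] by (simp add: Vmap_def)
  show "\<exists>\<sigma>. \<tau> \<in> Vmap W \<sigma>" if "\<tau> \<in> upper_regular W" for \<tau>
    using that unfolding upper_regular_def Vmap_def by simp
  show "step_index W \<nu> < length W" if "\<nu> \<in> K" for \<nu>
    using step_index_added[OF that] by blast
  show "card \<rho> = card \<rho>'" if "\<rho> \<in> bd K \<nu>" "\<rho>' \<in> bd K \<nu>" for \<nu> \<rho> \<rho>'
    using that unfolding bd_def by simp
  show "card \<rho> = card \<rho>'" if "\<rho> \<in> cobd K \<nu>" "\<rho>' \<in> cobd K \<nu>" for \<nu> \<rho> \<rho>'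
    using that unfolding cobd_def by simp
qed (fact critical_regular_partition Vmap_lower_regular step_index_bd step_index_Vmap)+

lemma subset_simplices_dim_iff:
  "(\<forall>\<nu>\<in>K. f \<nu> \<subseteq> critical W \<inter> simplices_dim K (card \<nu> - 1)) \<longleftrightarrow>
     (\<forall>\<nu>\<in>K. f \<nu> \<subseteq> critical W \<inter> {x\<in>K. card x = card \<nu>})"
proof (intro ball_cong refl)
  fix \<nu> assume "\<nu> \<in> K"
  then have "card \<nu> > 0"
    using simplicial_complex_K unfolding simplicial_complex_def by (simp add: card_gt_0_iff)
  then show "f \<nu> \<subseteq> critical W \<inter> simplices_dim K (card \<nu> - 1) \<longleftrightarrow>
      f \<nu> \<subseteq> critical W \<inter> {x\<in>K. card x = card \<nu>}"
    unfolding simplices_dim_def by simp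
qed

lemma is_reference_map_iff:
  "is_reference_map K W f \<longleftrightarrow> is_reference_map_on K (critical W) (upper_regular W) (bd K) card f"
  unfolding is_reference_map_def is_reference_map_on_def subset_simplices_dim_iff ..

lemma is_coreference_map_iff:
  "is_coreference_map K W f \<longleftrightarrow> is_reference_map_on K (critical W) (lower_regular W) (cobd K) card f"
  unfolding is_coreference_map_def is_reference_map_on_def subset_simplices_dim_iff ..

end

lemma flow_bar_eq: "flow_bar K W = stable_limit (gradient_flow (bd K) (Vmap W))"
  unfolding flow_bar_def flow_def gradient_flow_def stable_limit_def ..

lemma coflow_bar_eq:
  "coflow_bar K W = stable_limit (gradient_flow (cobd K) (\<lambda>\<tau>. {\<sigma>. \<tau> \<in> Vmap W \<sigma>}))"
  unfolding coflow_bar_def coflow_def gradient_flow_def stable_limit_def Vstar_def Vmap_def by simp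

lemma ext_reference_eq: "ext_reference K W = ext_map K (coreference_map K W)"
  unfolding ext_reference_def ext_map_def ..

lemma ext_coreference_eq: "ext_coreference K W = ext_map K (reference_map K W)"
  unfolding ext_coreference_def ext_map_def ..

theorem theorem13:
  fixes K :: "'v set set" and W :: "'v step list" and p :: nat
  assumes "morse_sequence K W"
  shows "\<forall>c. c \<subseteq> simplices_dim K p \<longrightarrow>
           flow_bar K W c = lin (ext_reference K W) (lin (reference_map K W) c) \<and>
           coflow_bar K W c = lin (ext_coreference K W) (lin (coreference_map K W) c)"
proof (intro allI impI)
  interpret fwd: morse_matching K "critical W" "lower_regular W" "upper_regular W" "bd K" "cobd K"
      "Vmap W" "step_index W" card "length W"
    using assms by (rule morse_matching_of_morse_sequence)
  interpret bwd: morse_matching K "critical W" "upper_regular W" "lower_regular W" "cobd K" "bd K"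
      "\<lambda>\<tau>. {\<sigma>. \<tau> \<in> Vmap W \<sigma>}" "\<lambda>\<nu>. length W - step_index W \<nu>" card "Suc (length W)"
    by (rule fwd.dual_morse_matching)
  have ref: "is_reference_map_on K (critical W) (upper_regular W) (bd K) card (reference_map K W)"
    using theI'[OF fwd.ex1_reference_map_on]
    unfolding reference_map_def is_reference_map_iff[OF assms] .
  have coref:
    "is_reference_map_on K (critical W) (lower_regular W) (cobd K) card (coreference_map K W)"
    using theI'[OF bwd.ex1_reference_map_on]
    unfolding coreference_map_def is_coreference_map_iff[OF assms] .
  fix c assume "c \<subseteq> simplices_dim K p"
  then have "c \<subseteq> K" unfolding simplices_dim_def by blast
  show "flow_bar K W c = lin (ext_reference K W) (lin (reference_map K W) c) \<and>
      coflow_bar K W c = lin (ext_coreference K W) (lin (coreference_map K W) c)"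
    unfolding flow_bar_eq coflow_bar_eq ext_reference_eq ext_coreference_eq
    using fwd.stable_limit_flow_eq[OF ref coref \<open>c \<subseteq> K\<close>]
      bwd.stable_limit_flow_eq[OF coref ref \<open>c \<subseteq> K\<close>] by simp
qed

end
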